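(* In the setting below, suppose that either (1) $\mathbb{P}(X=x)>0$, or (2) there exists $r>0$ such that $\mathbb{E}[\mathbb{I}_{\bar B_r}(X)\,|\eta(X)-\eta(x)|]=0$. Then $\mathbb{E}\big[|\eta(X^x_m)-\eta(x)|\big]\to 0$ as $m\to\infty$.
   Context: Let $(\mathcal{X},d)$ be a metric space with its Borel $\sigma$-algebra, let $(\Omega,\mathcal{F},\mathbb{P})$ be a probability space, and let $X,X_1,X_2,\dots$ be i.i.d. $\mathcal{X}$-valued random variables with common law $\mathbb{P}_X$. For $x\in\mathcal{X}$ and $r>0$ write $B_r=\{x':d(x,x')<r\}$, $\bar B_r=\{x':d(x,x')\le r\}$ and $S_r=\{x':d(x,x')=r\}$. The support of $\mathbb{P}_X$ is the set of $x$ such that $\mathbb{P}_X(\bar B_r(x))>0$ for all $r>0$. Fix $x$ in the support of $\mathbb{P}_X$ and a bounded measurable $\eta:\mathcal{X}\to\mathbb{R}$. For each $m\in\mathbb{N}$, a nearest neighbor of $x$ among $X_1,\dots,X_m$ is a measurable $X^x_m:\Omega\to\mathcal{X}$ with $X^x_m(\omega)\in\arg\min_{x'\in\{X_1(\omega),\dots,X_m(\omega)\}}d(x,x')$ for every $\omega\in\Omega$; fix such a sequence $(X^x_m)_{m\in\mathbb{N}}$. *)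

theory Defs
  imports "HOL-Probability.Probability"
begin

end

theory Submission
  imports Defs
begin

text \<open>
  Either hypothesis yields a closed ball around \<open>x\<close> (of radius \<open>0\<close> under the atom condition)
  of positive mass \<open>q\<close> under the law of \<open>X\<close>, on which \<open>\<eta> = \<eta> x\<close> almost everywhere.
  As soon as one of \<open>X\<^sub>1, \<dots>, X\<^sub>m\<close> falls into that ball, so does the nearest neighbour,
  and then its error vanishes almost surely. By independence, all \<open>m\<close> samples miss the ball
  with probability \<open>(1 - q)\<^sup>m\<close>, so the expected error is at most
  \<open>2 sup \<bar>\<eta>\<bar> (1 - q)\<^sup>m \<longrightarrow> 0\<close>.
\<close>

lemma (in prob_space) prob_indep_all_in_eq_power:
  assumes indep: "indep_vars (\<lambda>_. borel) Y I" and J: "finite J" "J \<subseteq> I"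
    and A: "A \<in> sets borel"
    and law: "\<And>i. i \<in> J \<Longrightarrow> measure (distr M borel (Y i)) A = p"
  shows "prob {\<omega> \<in> space M. \<forall>i\<in>J. Y i \<omega> \<in> A} = p ^ card J"
proof (cases "J = {}")
  case True
  then show ?thesis by (simp add: prob_space)
next
  case False
  have Y_meas: "Y i \<in> borel_measurable M" if "i \<in> J" for i
    using indep J that by (auto simp: indep_vars_def)
  have "{\<omega> \<in> space M. \<forall>i\<in>J. Y i \<omega> \<in> A} = (\<Inter>i\<in>J. Y i -` A \<inter> space M)"
    using False by auto
  also have "prob \<dots> = (\<Prod>i\<in>J. prob (Y i -` A \<inter> space M))"
    using indep False J A by (intro indep_varsD) auto
  also have "\<dots> = (\<Prod>i\<in>J. p)"
    using law A Y_meas by (intro prod.cong refl) (simp add: measure_distr)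
  finally show ?thesis by simp
qed

lemma (in prob_space) integral_abs_le_bound_times_prob:
  fixes f :: "'a \<Rightarrow> real"
  assumes [measurable]: "f \<in> borel_measurable M" "E \<in> events"
    and bound: "AE \<omega> in M. \<bar>f \<omega>\<bar> \<le> B * indicator E \<omega>"
  shows "(\<integral>\<omega>. \<bar>f \<omega>\<bar> \<partial>M) \<le> B * prob E"
proof -
  have "AE \<omega> in M. \<bar>f \<omega>\<bar> \<le> \<bar>B\<bar>"
    using bound by eventually_elim (auto simp: indicator_def of_bool_def split: if_splits)
  then have "integrable M (\<lambda>\<omega>. \<bar>f \<omega>\<bar>)"
    by (intro integrable_const_bound[where B="\<bar>B\<bar>"]) auto
  moreover have "integrable M (indicator E :: 'a \<Rightarrow> real)"
    by (intro integrable_real_indicator) (auto simp: emeasure_eq_measure)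
  ultimately have "(\<integral>\<omega>. \<bar>f \<omega>\<bar> \<partial>M) \<le> (\<integral>\<omega>. B * indicator E \<omega> \<partial>M)"
    using bound by (intro integral_mono_AE) auto
  then show ?thesis by simp
qed

lemma bounded_range_obtain_abs_diff_le:
  fixes f :: "'a \<Rightarrow> real"
  assumes "bounded (range f)"
  obtains B where "\<And>y. \<bar>f y - f z\<bar> \<le> B"
proof -
  obtain K where K: "\<And>y. \<bar>f y\<bar> \<le> K"
    using assms by (auto simp: bounded_iff)
  have "\<bar>f y - f z\<bar> \<le> 2 * K" for y
    using K[of y] K[of z] by linarith
  then show ?thesis by (rule that)
qed

lemma (in prob_space) obtain_ball_AE_constant:
  fixes X :: "'a \<Rightarrow> 'c::metric_space" and \<eta> :: "'c \<Rightarrow> real"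
  assumes X_meas[measurable]: "X \<in> borel_measurable M"
    and \<eta>_meas[measurable]: "\<eta> \<in> borel_measurable borel" and \<eta>_bdd: "bounded (range \<eta>)"
    and supp: "\<And>r. r > 0 \<Longrightarrow> measure (distr M borel X) (cball x r) > 0"
    and cond: "prob {\<omega> \<in> space M. X \<omega> = x} > 0 \<or>
               (\<exists>r>0. (\<integral>\<omega>. indicator (cball x r) (X \<omega>) * \<bar>\<eta> (X \<omega>) - \<eta> x\<bar> \<partial>M) = 0)"
  obtains r where "AE y in distr M borel X. y \<in> cball x r \<longrightarrow> \<eta> y = \<eta> x"
    and "measure (distr M borel X) (cball x r) > 0"
proof (cases "prob {\<omega> \<in> space M. X \<omega> = x} > 0")
  case True
  have "measure (distr M borel X) (cball x 0) = prob {\<omega> \<in> space M. X \<omega> = x}"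
    by (subst measure_distr) (auto intro!: arg_cong[where f=prob])
  with True show ?thesis
    by (intro that[of 0]) auto
next
  case False
  with cond obtain r where r: "r > 0"
    and int0: "(\<integral>\<omega>. indicator (cball x r) (X \<omega>) * \<bar>\<eta> (X \<omega>) - \<eta> x\<bar> \<partial>M) = 0"
    by auto
  obtain K where K: "\<And>y. \<bar>\<eta> y - \<eta> x\<bar> \<le> K"
    using bounded_range_obtain_abs_diff_le[OF \<eta>_bdd] by blast
  have [measurable]: "cball x r \<in> sets borel" by simp
  have "integrable M (\<lambda>\<omega>. indicator (cball x r) (X \<omega>) * \<bar>\<eta> (X \<omega>) - \<eta> x\<bar>)"
    using K K[of x] by (intro integrable_const_bound[where B=K]) (auto split: split_indicator)
  with int0 have "AE \<omega> in M. indicator (cball x r) (X \<omega>) * \<bar>\<eta> (X \<omega>) - \<eta> x\<bar> = (0::real)"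
    by (subst (asm) integral_nonneg_eq_0_iff_AE) auto
  then have "AE \<omega> in M. X \<omega> \<in> cball x r \<longrightarrow> \<eta> (X \<omega>) = \<eta> x"
    by eventually_elim (auto split: split_indicator)
  moreover have "{y \<in> space borel. y \<in> cball x r \<longrightarrow> \<eta> y = \<eta> x} \<in> sets borel"
    by measurable
  ultimately have "AE y in distr M borel X. y \<in> cball x r \<longrightarrow> \<eta> y = \<eta> x"
    by (subst AE_distr_iff) auto
  then show ?thesis using supp[OF r] by (rule that)
qed

locale iid_nearest_neighbor = prob_space M
  for M :: "'b measure" and \<mu> :: "'a::metric_space measure"
    and Xs :: "nat \<Rightarrow> 'b \<Rightarrow> 'a" and NN :: "nat \<Rightarrow> 'b \<Rightarrow> 'a" and x :: 'a +
  assumes indep_samples: "indep_vars (\<lambda>_. borel) Xs {1..}"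
    and distr_samples: "\<And>i. i \<ge> 1 \<Longrightarrow> distr M borel (Xs i) = \<mu>"
    and NN_meas: "\<And>m. m \<ge> 1 \<Longrightarrow> NN m \<in> borel_measurable M"
    and NN_in: "\<And>m \<omega>. m \<ge> 1 \<Longrightarrow> \<omega> \<in> space M \<Longrightarrow> NN m \<omega> \<in> (\<lambda>i. Xs i \<omega>) ` {1..m}"
    and NN_min: "\<And>m \<omega> i. m \<ge> 1 \<Longrightarrow> \<omega> \<in> space M \<Longrightarrow> i \<in> {1..m} \<Longrightarrow>
                   dist x (NN m \<omega>) \<le> dist x (Xs i \<omega>)"
begin

lemma samples_measurable: "i \<ge> 1 \<Longrightarrow> Xs i \<in> borel_measurable M"
  using indep_samples by (auto simp: indep_vars_def)

lemma prob_space_sample_distr: "prob_space \<mu>"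
  using distr_samples[of 1] samples_measurable[of 1] by (metis le_refl prob_space_distr)

lemma prob_no_sample_in:
  assumes "A \<in> sets borel"
  shows "prob {\<omega> \<in> space M. \<forall>i\<in>{1..m}. Xs i \<omega> \<notin> A} = (1 - measure \<mu> A) ^ m"
proof -
  interpret \<mu>: prob_space \<mu> by (rule prob_space_sample_distr)
  have "sets \<mu> = sets borel"
    using distr_samples[of 1] by auto
  then have "measure \<mu> (- A) = 1 - measure \<mu> A"
    using assms \<mu>.prob_compl[of A] sets_eq_imp_space_eq[of \<mu> borel]
    by (simp add: Compl_eq_Diff_UNIV)
  then have "prob {\<omega> \<in> space M. \<forall>i\<in>{1..m}. Xs i \<omega> \<in> - A} = (1 - measure \<mu> A) ^ card {1..m}"
    using assms distr_samples by (intro prob_indep_all_in_eq_power[OF indep_samples]) auto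
  then show ?thesis by simp
qed

lemma nearest_neighbor_in_cball:
  assumes "m \<ge> 1" "\<omega> \<in> space M" "i \<in> {1..m}" "Xs i \<omega> \<in> cball x r"
  shows "NN m \<omega> \<in> cball x r"
  using NN_min[OF assms(1-3)] assms(4) by simp

lemma nearest_neighbor_error_le:
  fixes \<eta> :: "'a \<Rightarrow> real"
  assumes \<eta>_meas[measurable]: "\<eta> \<in> borel_measurable borel"
    and B: "\<And>y. \<bar>\<eta> y - \<eta> x\<bar> \<le> B"
    and const: "AE y in \<mu>. y \<in> cball x r \<longrightarrow> \<eta> y = \<eta> x"
    and m: "m \<ge> 1"
  shows "(\<integral>\<omega>. \<bar>\<eta> (NN m \<omega>) - \<eta> x\<bar> \<partial>M) \<le> B * (1 - measure \<mu> (cball x r)) ^ m"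
proof -
  define E where "E = {\<omega> \<in> space M. \<forall>i\<in>{1..m}. Xs i \<omega> \<notin> cball x r}"
  have [measurable]: "cball x r \<in> sets borel"
    by simp
  have [measurable]: "NN m \<in> borel_measurable M"
    using NN_meas[OF m] .
  have "{\<omega> \<in> space M. Xs i \<omega> \<notin> cball x r} \<in> events" if "i \<ge> 1" for i
  proof -
    have [measurable]: "Xs i \<in> borel_measurable M"
      using samples_measurable that .
    show ?thesis by measurable
  qed
  then have "E \<in> events"
    unfolding E_def by (intro sets.sets_Collect_finite_All) auto
  have const_sample: "AE \<omega> in M. Xs i \<omega> \<in> cball x r \<longrightarrow> \<eta> (Xs i \<omega>) = \<eta> x"
    if "i \<in> {1..m}" for i
  proof -
    have [measurable]: "Xs i \<in> borel_measurable M"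
      using samples_measurable that by simp
    have "{y \<in> space borel. y \<in> cball x r \<longrightarrow> \<eta> y = \<eta> x} \<in> sets borel"
      by measurable
    moreover have "AE y in distr M borel (Xs i). y \<in> cball x r \<longrightarrow> \<eta> y = \<eta> x"
      using const that by (subst distr_samples) auto
    ultimately show ?thesis
      by (subst (asm) AE_distr_iff) auto
  qed
  have "AE \<omega> in M. \<forall>i\<in>{1..m}. Xs i \<omega> \<in> cball x r \<longrightarrow> \<eta> (Xs i \<omega>) = \<eta> x"
    using const_sample by (intro AE_finite_allI) auto
  with AE_space have "AE \<omega> in M. \<bar>\<eta> (NN m \<omega>) - \<eta> x\<bar> \<le> B * indicator E \<omega>"
  proof eventually_elim
    case (elim \<omega>)
    show ?case
    proof (cases "\<omega> \<in> E")
      case True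
      then show ?thesis using B by simp
    next
      case False
      then obtain i where "i \<in> {1..m}" "Xs i \<omega> \<in> cball x r"
        using elim by (auto simp: E_def)
      then have "NN m \<omega> \<in> cball x r"
        using nearest_neighbor_in_cball m elim by blast
      moreover obtain j where "j \<in> {1..m}" "NN m \<omega> = Xs j \<omega>"
        using NN_in[OF m] elim by blast
      ultimately show ?thesis
        using elim B[of x] by (simp add: indicator_def)
    qed
  qed
  then have "(\<integral>\<omega>. \<bar>\<eta> (NN m \<omega>) - \<eta> x\<bar> \<partial>M) \<le> B * prob E"
    using \<open>E \<in> events\<close> by (intro integral_abs_le_bound_times_prob) auto
  also have "prob E = (1 - measure \<mu> (cball x r)) ^ m"
    unfolding E_def by (intro prob_no_sample_in) simp
  finally show ?thesis .
qed

lemma nearest_neighbor_error_tendsto_0: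
  fixes \<eta> :: "'a \<Rightarrow> real"
  assumes \<eta>_meas: "\<eta> \<in> borel_measurable borel" and \<eta>_bdd: "bounded (range \<eta>)"
    and const: "AE y in \<mu>. y \<in> cball x r \<longrightarrow> \<eta> y = \<eta> x"
    and pos: "measure \<mu> (cball x r) > 0"
  shows "(\<lambda>m. \<integral>\<omega>. \<bar>\<eta> (NN m \<omega>) - \<eta> x\<bar> \<partial>M) \<longlonglongrightarrow> 0"
proof -
  obtain B where B: "\<And>y. \<bar>\<eta> y - \<eta> x\<bar> \<le> B"
    using bounded_range_obtain_abs_diff_le[OF \<eta>_bdd] by blast
  have "measure \<mu> (cball x r) \<le> 1"
    using prob_space.prob_le_1[OF prob_space_sample_distr] .
  then have "(\<lambda>m. B * (1 - measure \<mu> (cball x r)) ^ m) \<longlonglongrightarrow> B * 0"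
    using pos by (intro tendsto_mult tendsto_const LIMSEQ_power_zero) auto
  then have bound_0: "(\<lambda>m. B * (1 - measure \<mu> (cball x r)) ^ m) \<longlonglongrightarrow> 0"
    by simp
  show ?thesis
  proof (rule tendsto_sandwich[OF _ _ tendsto_const bound_0])
    show "\<forall>\<^sub>F m in sequentially. 0 \<le> (\<integral>\<omega>. \<bar>\<eta> (NN m \<omega>) - \<eta> x\<bar> \<partial>M)"
      by simp
    show "\<forall>\<^sub>F m in sequentially.
            (\<integral>\<omega>. \<bar>\<eta> (NN m \<omega>) - \<eta> x\<bar> \<partial>M) \<le> B * (1 - measure \<mu> (cball x r)) ^ m"
      using nearest_neighbor_error_le[OF \<eta>_meas B const] eventually_sequentially by blast
  qed
qed

end

theorem mainTheorem2:
  fixes M :: "'b measure"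
    and X :: "'b \<Rightarrow> 'a::metric_space"
    and Xs :: "nat \<Rightarrow> 'b \<Rightarrow> 'a"
    and NN :: "nat \<Rightarrow> 'b \<Rightarrow> 'a"
    and \<eta> :: "'a \<Rightarrow> real"
    and x :: 'a
  assumes P: "prob_space M"
    and X_meas: "X \<in> measurable M borel"
    and Xs_meas: "\<And>i. i \<ge> 1 \<Longrightarrow> Xs i \<in> measurable M borel"
    and indep: "prob_space.indep_vars M (\<lambda>_. borel) (\<lambda>i. if i = 0 then X else Xs i) UNIV"
    and ident: "\<And>i. i \<ge> 1 \<Longrightarrow> distr M borel (Xs i) = distr M borel X"
    and supp: "\<And>r. r > 0 \<Longrightarrow> measure (distr M borel X) (cball x r) > 0"
    and \<eta>_meas: "\<eta> \<in> borel_measurable borel"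
    and \<eta>_bdd: "bounded (range \<eta>)"
    and NN_meas: "\<And>m. m \<ge> 1 \<Longrightarrow> NN m \<in> measurable M borel"
    and NN_in: "\<And>m \<omega>. m \<ge> 1 \<Longrightarrow> \<omega> \<in> space M \<Longrightarrow> NN m \<omega> \<in> (\<lambda>i. Xs i \<omega>) ` {1..m}"
    and NN_min: "\<And>m \<omega> i. m \<ge> 1 \<Longrightarrow> \<omega> \<in> space M \<Longrightarrow> i \<in> {1..m} \<Longrightarrow>
                   dist x (NN m \<omega>) \<le> dist x (Xs i \<omega>)"
    and cond: "measure M {\<omega> \<in> space M. X \<omega> = x} > 0 \<or>
               (\<exists>r>0. (\<integral>\<omega>. indicator (cball x r) (X \<omega>) * \<bar>\<eta> (X \<omega>) - \<eta> x\<bar> \<partial>M) = 0)"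
  shows "(\<lambda>m. \<integral>\<omega>. \<bar>\<eta> (NN m \<omega>) - \<eta> x\<bar> \<partial>M) \<longlonglongrightarrow> 0"
proof -
  interpret prob_space M by (rule P)
  have "indep_vars (\<lambda>_. borel) (\<lambda>i. if i = 0 then X else Xs i) {1..}"
    using indep by (rule indep_vars_subset) simp
  then have "indep_vars (\<lambda>_. borel) Xs {1..}"
    by (rule iffD1[OF indep_vars_cong, rotated -1]) auto
  then interpret iid_nearest_neighbor M "distr M borel X" Xs NN x
    using ident NN_meas NN_in NN_min by unfold_locales auto
  obtain r where "AE y in distr M borel X. y \<in> cball x r \<longrightarrow> \<eta> y = \<eta> x"
    and "measure (distr M borel X) (cball x r) > 0"
    using obtain_ball_AE_constant[OF X_meas \<eta>_meas \<eta>_bdd supp cond] by blast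
  then show ?thesis
    using \<eta>_meas \<eta>_bdd by (intro nearest_neighbor_error_tendsto_0)
qed

end
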